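(* Let $E$ be a functional defined on all $n$-qubit pure states, for all natural numbers $n$. Suppose (i) $E$ is a type I entanglement monotone, and (ii) $E(|\psi\rangle|0\rangle)=E(|\psi\rangle)$ for every multi-qubit state $|\psi\rangle$. Then $E$ is a type II entanglement monotone.
   Context: A type I entanglement monotone is a functional $M$ such that, for every $n$ and every LOCC protocol (each qubit a separate party) applied to an $n$-qubit state $|\psi\rangle$ yielding $n$-qubit output states $|\psi_i\rangle$ with probabilities $p_i$, one has $M(|\psi\rangle)\ge\sum_i p_iM(|\psi_i\rangle)$. For an $N$-qubit $|\psi\rangle$ and an $n$-qubit $|\phi\rangle$, $n\le N$, write $|\psi\rangle\geq_{\mathrm{LOCC}}|\phi\rangle$ if for some set $A$ of $n$ qubits the transformation $|\psi\rangle\to|\phi\rangle^{A}|0\rangle^{\bar A}$ is achievable exactly and with probability one by LOCC. A type II entanglement monotone is a functional $E$ on all $n$-qubit states, all $n$, with $E(|\psi\rangle)\ge E(|\psi'\rangle)$ whenever $|\psi\rangle\geq_{\mathrm{LOCC}}|\psi'\rangle$. *)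

theory Defs
  imports Complex_Main
begin

text \<open>An n-qubit (unnormalised) vector: amplitudes indexed by computational basis
strings b :: nat \<Rightarrow> bool, where b k is the value of qubit k (qubits 0..n-1).\<close>
type_synonym qstate = "(nat \<Rightarrow> bool) \<Rightarrow> complex"

definition qbasis :: "nat \<Rightarrow> (nat \<Rightarrow> bool) set" where
  "qbasis n = {b. \<forall>k. b k \<longrightarrow> k < n}"

definition snorm2 :: "nat \<Rightarrow> qstate \<Rightarrow> real" where
  "snorm2 n v = (\<Sum>b\<in>qbasis n. (cmod (v b))^2)"

definition is_state :: "nat \<Rightarrow> qstate \<Rightarrow> bool" where
  "is_state n v \<longleftrightarrow> (\<forall>b. b \<notin> qbasis n \<longrightarrow> v b = 0) \<and> snorm2 n v = 1"

definition normalize :: "nat \<Rightarrow> qstate \<Rightarrow> qstate" where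
  "normalize n v = (\<lambda>b. v b / complex_of_real (sqrt (snorm2 n v)))"

text \<open>A single-qubit operator (2x2 complex matrix, K out in) acting on qubit j.\<close>
type_synonym qop = "bool \<Rightarrow> bool \<Rightarrow> complex"

definition apply_local :: "nat \<Rightarrow> qop \<Rightarrow> qstate \<Rightarrow> qstate" where
  "apply_local j K v = (\<lambda>b. \<Sum>c\<in>UNIV. K (b j) c * v (b(j := c)))"

definition kraus_complete :: "qop list \<Rightarrow> bool" where
  "kraus_complete Ks \<longleftrightarrow>
     (\<forall>c d. (\<Sum>K\<leftarrow>Ks. \<Sum>a\<in>UNIV. cnj (K a c) * K a d) = (if c = d then 1 else 0))"

text \<open>(Finite-round) LOCC protocols with each qubit a separate party: in each round
one party j performs a local measurement given by Kraus operators; depending on the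
(broadcast) outcome, the protocol continues with a subprotocol.\<close>
datatype locc = Done | Meas nat "(qop \<times> locc) list"

fun wf_locc :: "nat \<Rightarrow> locc \<Rightarrow> bool" where
  "wf_locc n Done = True"
| "wf_locc n (Meas j ks) =
     (j < n \<and> kraus_complete (map fst ks) \<and> (\<forall>x\<in>set ks. wf_locc n (snd x)))"

text \<open>Unnormalised output vectors of all branches (squared norm = probability).\<close>
fun outcomes :: "locc \<Rightarrow> qstate \<Rightarrow> qstate list" where
  "outcomes Done v = [v]"
| "outcomes (Meas j ks) v = concat (map (\<lambda>x. outcomes (snd x) (apply_local j (fst x) v)) ks)"

text \<open>Type I entanglement monotone: non-increasing on average under LOCC.
  Outputs |psi_i> with probabilities p_i > 0 (zero-probability branches do not occur).\<close>
definition typeI_monotone :: "(nat \<Rightarrow> qstate \<Rightarrow> real) \<Rightarrow> bool" where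
  "typeI_monotone E \<longleftrightarrow>
     (\<forall>n \<psi> P. n \<ge> 1 \<and> is_state n \<psi> \<and> wf_locc n P \<longrightarrow>
        E n \<psi> \<ge> (\<Sum>v\<leftarrow>filter (\<lambda>v. snorm2 n v \<noteq> 0) (outcomes P \<psi>).
                    snorm2 n v * E n (normalize n v)))"

text \<open>The N-qubit state |phi>^A |0>^(complement of A): the qubits of the
  n-qubit state phi are placed, in order, on the qubits of A (|A| = n).\<close>
definition embed :: "nat \<Rightarrow> nat set \<Rightarrow> qstate \<Rightarrow> qstate" where
  "embed N A \<phi> = (\<lambda>b. if (\<forall>k. k \<notin> A \<longrightarrow> \<not> b k)
       then \<phi> (\<lambda>i. i < card A \<and> b (sorted_list_of_set A ! i)) else 0)"

text \<open>psi >=_LOCC phi: exact transformation with probability one.\<close>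
definition locc_geq :: "nat \<Rightarrow> qstate \<Rightarrow> nat \<Rightarrow> qstate \<Rightarrow> bool" where
  "locc_geq N \<psi> n \<phi> \<longleftrightarrow>
     (\<exists>A P. A \<subseteq> {..<N} \<and> card A = n \<and> wf_locc N P \<and>
        (\<forall>v\<in>set (outcomes P \<psi>). snorm2 N v \<noteq> 0 \<longrightarrow> normalize N v = embed N A \<phi>))"

definition typeII_monotone :: "(nat \<Rightarrow> qstate \<Rightarrow> real) \<Rightarrow> bool" where
  "typeII_monotone E \<longleftrightarrow>
     (\<forall>N n \<psi> \<phi>. 1 \<le> n \<and> n \<le> N \<and> is_state N \<psi> \<and> is_state n \<phi> \<and> locc_geq N \<psi> n \<phi>
        \<longrightarrow> E N \<psi> \<ge> E n \<phi>)"

text \<open>Adjoin a new qubit in state |0> at position k (0 \<le> k \<le> n) of an n-qubit state;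
  the old qubits k, k+1, ... become k+1, k+2, ...\<close>
definition insert_zero :: "nat \<Rightarrow> qstate \<Rightarrow> qstate" where
  "insert_zero k v = (\<lambda>b. if b k then 0 else v (\<lambda>i. if i < k then b i else b (Suc i)))"

end

theory Submission
  imports Defs
begin

text \<open>Invariance under adjoining |0> qubits means that E does not see the idle qubits of
  embed N A \<phi>: placing \<phi> on A and |0> elsewhere is an iteration of single insert_zero
  steps, so E N (embed N A \<phi>) = E n \<phi>. If locc_geq N \<psi> n \<phi>, every branch of the
  protocol ends in this embedded state, and since the branch probabilities of an LOCC protocol
  sum to one (Kraus completeness in each round), the type I inequality
  E(\<psi>) \<ge> \<Sum> p_i E(\<psi>_i) becomes E(\<psi>) \<ge> E(\<phi>).\<close>

lemma sum_list_sum_swap: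
  "(\<Sum>x\<leftarrow>xs. \<Sum>y\<in>S. f x y) = (\<Sum>y\<in>S. \<Sum>x\<leftarrow>xs. f x y :: 'a::comm_monoid_add)"
  by (induction xs) (simp_all add: sum.distrib)

lemma sum_list_concat: "sum_list (concat xss) = sum_list (map sum_list xss :: 'a::monoid_add list)"
  by (induction xss) simp_all

lemma finite_qbasis: "finite (qbasis N)"
proof (rule finite_subset)
  show "qbasis N \<subseteq> (\<lambda>S k. k \<in> S) ` Pow {..<N}"
  proof
    fix b assume "b \<in> qbasis N"
    hence "{k. b k} \<in> Pow {..<N}" by (auto simp: qbasis_def)
    moreover have "b = (\<lambda>k. k \<in> {k. b k})" by simp
    ultimately show "b \<in> (\<lambda>S k. k \<in> S) ` Pow {..<N}" by blast
  qed
qed simp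

lemma sum_qbasis_split_qubit:
  assumes "j < N"
  shows "(\<Sum>b\<in>qbasis N. f b) = (\<Sum>b\<in>{b\<in>qbasis N. \<not> b j}. \<Sum>a\<in>UNIV. f (b(j := a)))"
proof -
  have "(\<Sum>b\<in>{b\<in>qbasis N. \<not> b j}. \<Sum>a\<in>UNIV. f (b(j := a)))
      = (\<Sum>(b, a)\<in>{b\<in>qbasis N. \<not> b j} \<times> UNIV. f (b(j := a)))"
    by (simp add: sum.cartesian_product)
  also have "\<dots> = (\<Sum>b\<in>qbasis N. f b)"
    by (rule sum.reindex_bij_witness[where i="\<lambda>b. (b(j := False), b j)" and j="\<lambda>(b, a). b(j := a)"])
       (use assms in \<open>auto simp: qbasis_def fun_eq_iff split: if_splits\<close>)
  finally show ?thesis by simp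
qed

lemma kraus_complete_sum_norm:
  assumes "kraus_complete Ks"
  shows "(\<Sum>K\<leftarrow>Ks. \<Sum>a\<in>UNIV. (cmod (\<Sum>c\<in>UNIV. K a c * x c))\<^sup>2) = (\<Sum>c\<in>UNIV. (cmod (x c))\<^sup>2)"
proof -
  have sq: "complex_of_real ((cmod (\<Sum>c\<in>UNIV. K a c * x c))\<^sup>2)
      = (\<Sum>c\<in>UNIV. \<Sum>d\<in>UNIV. cnj (K a d) * K a c * (x c * cnj (x d)))" for K :: qop and a
    unfolding complex_norm_square by (simp add: sum_product mult_ac)
  have swap: "(\<Sum>a\<in>UNIV. \<Sum>c\<in>UNIV. \<Sum>d\<in>UNIV. F a c d) = (\<Sum>c\<in>UNIV. \<Sum>d\<in>UNIV. \<Sum>a\<in>UNIV. F a c d)"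
    for F :: "bool \<Rightarrow> bool \<Rightarrow> bool \<Rightarrow> complex"
    by (rule trans[OF sum.swap], rule sum.cong[OF refl], rule sum.swap)
  have "complex_of_real (\<Sum>K\<leftarrow>Ks. \<Sum>a\<in>UNIV. (cmod (\<Sum>c\<in>UNIV. K a c * x c))\<^sup>2)
      = (\<Sum>K\<leftarrow>Ks. \<Sum>a\<in>UNIV. \<Sum>c\<in>UNIV. \<Sum>d\<in>UNIV. cnj (K a d) * K a c * (x c * cnj (x d)))"
    unfolding sum_list_of_real[symmetric] map_map o_def of_real_sum sq ..
  also have "\<dots> = (\<Sum>c\<in>UNIV. \<Sum>d\<in>UNIV. (\<Sum>K\<leftarrow>Ks. \<Sum>a\<in>UNIV. cnj (K a d) * K a c) * (x c * cnj (x d)))"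
    using swap by (simp add: sum_list_sum_swap sum_distrib_right sum_list_mult_const)
  also have "\<dots> = (\<Sum>c\<in>UNIV. x c * cnj (x c))"
    using assms by (simp add: kraus_complete_def if_distrib[of "\<lambda>z. z * _"] cong: if_cong)
  also have "\<dots> = complex_of_real (\<Sum>c\<in>UNIV. (cmod (x c))\<^sup>2)"
    unfolding of_real_sum complex_norm_square ..
  finally show ?thesis
    using of_real_eq_iff by blast
qed

lemma sum_snorm2_apply_local:
  assumes "j < N" "kraus_complete Ks"
  shows "(\<Sum>K\<leftarrow>Ks. snorm2 N (apply_local j K v)) = snorm2 N v"
proof -
  let ?Q = "{b\<in>qbasis N. \<not> b j}"
  have "snorm2 N (apply_local j K v) = (\<Sum>b\<in>?Q. \<Sum>a\<in>UNIV. (cmod (\<Sum>c\<in>UNIV. K a c * v (b(j := c))))\<^sup>2)"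
    for K
    unfolding snorm2_def sum_qbasis_split_qubit[OF assms(1)] by (simp add: apply_local_def)
  hence "(\<Sum>K\<leftarrow>Ks. snorm2 N (apply_local j K v))
      = (\<Sum>b\<in>?Q. \<Sum>K\<leftarrow>Ks. \<Sum>a\<in>UNIV. (cmod (\<Sum>c\<in>UNIV. K a c * v (b(j := c))))\<^sup>2)"
    by (simp add: sum_list_sum_swap)
  also have "\<dots> = (\<Sum>b\<in>?Q. \<Sum>c\<in>UNIV. (cmod (v (b(j := c))))\<^sup>2)"
    using kraus_complete_sum_norm[OF assms(2)] by simp
  also have "\<dots> = snorm2 N v"
    unfolding snorm2_def sum_qbasis_split_qubit[OF assms(1)] ..
  finally show ?thesis .
qed

lemma sum_snorm2_outcomes:
  "wf_locc N P \<Longrightarrow> (\<Sum>w\<leftarrow>outcomes P v. snorm2 N w) = snorm2 N v"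
proof (induction P v rule: outcomes.induct)
  case (1 v)
  then show ?case by simp
next
  case (2 j ks v)
  have "(\<Sum>w\<leftarrow>outcomes (Meas j ks) v. snorm2 N w)
      = (\<Sum>x\<leftarrow>ks. \<Sum>w\<leftarrow>outcomes (snd x) (apply_local j (fst x) v). snorm2 N w)"
    by (simp add: sum_list_concat map_concat o_def)
  also have "\<dots> = (\<Sum>K\<leftarrow>map fst ks. snorm2 N (apply_local j K v))"
    using 2 by (simp add: o_def cong: map_cong)
  also have "\<dots> = snorm2 N v"
    using "2.prems" by (intro sum_snorm2_apply_local) auto
  finally show ?case .
qed

lemma typeI_monotone_deterministic_le:
  assumes "typeI_monotone E" "1 \<le> N" "is_state N \<psi>" "wf_locc N P"
    and "\<forall>v\<in>set (outcomes P \<psi>). snorm2 N v \<noteq> 0 \<longrightarrow> normalize N v = \<chi>"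
  shows "E N \<chi> \<le> E N \<psi>"
proof -
  let ?branches = "filter (\<lambda>v. snorm2 N v \<noteq> 0) (outcomes P \<psi>)"
  have "(\<Sum>v\<leftarrow>?branches. snorm2 N v) = (\<Sum>v\<leftarrow>outcomes P \<psi>. snorm2 N v)"
    by (rule sum_list_map_filter) simp
  hence "E N \<chi> = (\<Sum>v\<leftarrow>?branches. snorm2 N v) * E N \<chi>"
    using assms(3,4) by (simp add: sum_snorm2_outcomes is_state_def)
  also have "\<dots> = (\<Sum>v\<leftarrow>?branches. snorm2 N v * E N \<chi>)"
    by (simp add: sum_list_mult_const)
  also have "\<dots> = (\<Sum>v\<leftarrow>?branches. snorm2 N v * E N (normalize N v))"
    using assms(5) by (intro arg_cong[where f = sum_list] map_cong) auto
  also have "\<dots> \<le> E N \<psi>"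
    using assms(1-4) unfolding typeI_monotone_def by blast
  finally show ?thesis .
qed

lemma is_state_insert_zero:
  assumes "is_state n w" "k \<le> n"
  shows "is_state (Suc n) (insert_zero k w)"
proof -
  have outside: "insert_zero k w b = 0" if "b \<notin> qbasis (Suc n)" for b
  proof (cases "b k")
    case False
    from that obtain m where "b m" "\<not> m < Suc n" by (auto simp: qbasis_def)
    hence "(\<lambda>i. if i < k then b i else b (Suc i)) \<notin> qbasis n"
      unfolding qbasis_def using assms(2) by (auto intro!: exI[of _ "m - 1"])
    thus ?thesis using False assms(1) by (simp add: insert_zero_def is_state_def)
  qed (simp add: insert_zero_def)
  have "snorm2 (Suc n) (insert_zero k w) =
      (\<Sum>b\<in>{b\<in>qbasis (Suc n). \<not> b k}. (cmod (w (\<lambda>i. if i < k then b i else b (Suc i))))\<^sup>2)"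
    unfolding snorm2_def
    by (subst sum.inter_filter[OF finite_qbasis]) (auto simp: insert_zero_def intro!: sum.cong)
  also have "\<dots> = snorm2 n w"
    unfolding snorm2_def
    by (rule sum.reindex_bij_witness[where j="\<lambda>b i. if i < k then b i else b (Suc i)"
          and i="\<lambda>c i. if i < k then c i else if i = k then False else c (i - 1)"])
       (use assms(2) in \<open>auto simp: qbasis_def fun_eq_iff split: if_splits\<close>)
  finally show ?thesis
    using assms(1) outside by (simp add: is_state_def)
qed

definition place_qubits :: "nat \<Rightarrow> (nat \<Rightarrow> nat) \<Rightarrow> qstate \<Rightarrow> qstate" where
  "place_qubits n f \<phi> = (\<lambda>b. if (\<forall>k. k \<notin> f ` {..<n} \<longrightarrow> \<not> b k)
       then \<phi> (\<lambda>i. i < n \<and> b (f i)) else 0)"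

lemma embed_eq_place_qubits:
  assumes "finite A"
  shows "embed N A \<phi> = place_qubits (card A) ((!) (sorted_list_of_set A)) \<phi>"
proof -
  have "(!) (sorted_list_of_set A) ` {..<card A} = A"
    using assms nth_image[of "card A" "sorted_list_of_set A"] by (simp add: lessThan_atLeast0)
  thus ?thesis
    unfolding embed_def place_qubits_def by simp
qed

lemma strict_mono_on_nth_sorted_list_of_set:
  "strict_mono_on {..<card A} ((!) (sorted_list_of_set A))"
  by (rule strict_mono_onI) (auto intro: sorted_wrt_nth_less)

lemma strict_mono_on_lessThan_eq_id:
  fixes f :: "nat \<Rightarrow> nat"
  assumes "strict_mono_on {..<n} f" "\<forall>i<n. f i < n" "i < n"
  shows "f i = i"
proof -
  have gap: "f i + (j - i) \<le> f j" if "i \<le> j" "j < n" for i j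
    using that
  proof (induction j)
    case (Suc j)
    show ?case
    proof (cases "i = Suc j")
      case False
      hence "f i + (j - i) \<le> f j" using Suc by simp
      moreover have "f j < f (Suc j)" using assms(1) Suc.prems by (simp add: strict_mono_on_def)
      ultimately show ?thesis using Suc.prems False by linarith
    qed simp
  qed simp
  have "i \<le> f i" using gap[of 0 i] assms(3) by simp
  moreover have "f i + (n - 1 - i) \<le> f (n - 1)" using gap[of i "n - 1"] assms(3) by simp
  moreover have "f (n - 1) < n" using assms(2,3) by simp
  ultimately show ?thesis using assms(3) by linarith
qed

lemma place_qubits_id:
  assumes "is_state n \<phi>" "\<forall>i<n. f i = i"
  shows "place_qubits n f \<phi> = \<phi>"
proof
  fix b
  have image: "f ` {..<n} = {..<n}" using assms(2) by force
  show "place_qubits n f \<phi> b = \<phi> b"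
  proof (cases "b \<in> qbasis n")
    case True
    hence "(\<lambda>i. i < n \<and> b (f i)) = b" using assms(2) by (auto simp: qbasis_def fun_eq_iff)
    thus ?thesis using True image by (auto simp: place_qubits_def qbasis_def)
  next
    case False
    thus ?thesis using image assms(1) by (auto simp: place_qubits_def qbasis_def is_state_def)
  qed
qed

lemma place_qubits_eq_insert_zero:
  assumes "\<forall>i<n. f i = (if g i < k then g i else Suc (g i))"
  shows "place_qubits n f \<phi> = insert_zero k (place_qubits n g \<phi>)"
proof
  fix b :: "nat \<Rightarrow> bool"
  let ?s = "\<lambda>i. if i < k then i else Suc i"
  define b' where "b' j = b (?s j)" for j
  have "k \<notin> f ` {..<n}" using assms by auto
  show "place_qubits n f \<phi> b = insert_zero k (place_qubits n g \<phi>) b"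
  proof (cases "b k")
    case False
    have outside: "(\<forall>j. j \<notin> g ` {..<n} \<longrightarrow> \<not> b' j) \<longleftrightarrow> (\<forall>m. m \<notin> f ` {..<n} \<longrightarrow> \<not> b m)"
    proof
      assume outside_g: "\<forall>j. j \<notin> g ` {..<n} \<longrightarrow> \<not> b' j"
      show "\<forall>m. m \<notin> f ` {..<n} \<longrightarrow> \<not> b m"
      proof (intro allI impI)
        fix m assume "m \<notin> f ` {..<n}"
        show "\<not> b m"
        proof (cases "m = k")
          case False
          define j where "j = (if m < k then m else m - 1)"
          have "?s j = m" using False by (auto simp: j_def)
          hence "j \<notin> g ` {..<n}" using \<open>m \<notin> f ` {..<n}\<close> assms by force
          thus ?thesis using outside_g \<open>?s j = m\<close> by (auto simp: b'_def)
        qed (use \<open>\<not> b k\<close> in simp)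
      qed
    next
      assume "\<forall>m. m \<notin> f ` {..<n} \<longrightarrow> \<not> b m"
      moreover have "?s j \<notin> f ` {..<n}" if "j \<notin> g ` {..<n}" for j
        using that assms by (force split: if_splits)
      ultimately show "\<forall>j. j \<notin> g ` {..<n} \<longrightarrow> \<not> b' j" by (simp add: b'_def)
    qed
    have args: "(\<lambda>i. i < n \<and> b' (g i)) = (\<lambda>i. i < n \<and> b (f i))"
      using assms by (auto simp: b'_def)
    have "insert_zero k (place_qubits n g \<phi>) b = place_qubits n g \<phi> b'"
      using False by (simp add: insert_zero_def b'_def[abs_def])
    also have "\<dots> = place_qubits n f \<phi> b"
      unfolding place_qubits_def outside args ..
    finally show ?thesis ..
  qed (use \<open>k \<notin> f ` {..<n}\<close> in \<open>auto simp: place_qubits_def insert_zero_def\<close>)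
qed

lemma place_qubits_induct:
  assumes "n \<le> N" "strict_mono_on {..<n} f" "\<forall>i<n. f i < N" "is_state n \<phi>"
    and base: "P n \<phi>"
    and step: "\<And>N \<chi> k. n \<le> N \<Longrightarrow> P N \<chi> \<Longrightarrow> k \<le> N \<Longrightarrow> P (Suc N) (insert_zero k \<chi>)"
  shows "P N (place_qubits n f \<phi>)"
  using assms(1-3)
proof (induction N arbitrary: f rule: nat_induct_at_least)
  case base
  then show ?case
    using place_qubits_id[OF assms(4)] strict_mono_on_lessThan_eq_id assms(5) by metis
next
  case (Suc N)
  have "card (f ` {..<n}) < card {..<Suc N}"
    using card_image_le[of "{..<n}" f] Suc.hyps(1) by simp
  hence "\<not> {..<Suc N} \<subseteq> f ` {..<n}"
    using card_mono[OF finite_imageI[OF finite_lessThan], of "{..<Suc N}" f n] by linarith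
  then obtain k where k: "k < Suc N" "k \<notin> f ` {..<n}"
    by blast
  define g where "g i = (if f i < k then f i else f i - 1)" for i
  have f_g: "\<forall>i<n. f i = (if g i < k then g i else Suc (g i))"
  proof (intro allI impI)
    fix i assume "i < n"
    hence "f i \<noteq> k" using k(2) by blast
    thus "f i = (if g i < k then g i else Suc (g i))" by (auto simp: g_def)
  qed
  have "strict_mono_on {..<n} g"
  proof (rule strict_mono_onI)
    fix r s assume rs: "r \<in> {..<n}" "s \<in> {..<n}" "r < s"
    hence "f r < f s" using Suc.prems(1) by (simp add: strict_mono_on_def)
    moreover have "f r \<noteq> k" "f s \<noteq> k" using k(2) rs by auto
    ultimately show "g r < g s" unfolding g_def by (split if_split)+ linarith
  qed
  moreover have "\<forall>i<n. g i < N"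
  proof (intro allI impI)
    fix i assume "i < n"
    hence "f i < Suc N" "f i \<noteq> k" using Suc.prems(2) k(2) by auto
    thus "g i < N" using k(1) unfolding g_def by (split if_split) linarith
  qed
  ultimately have "P N (place_qubits n g \<phi>)"
    using Suc.IH by blast
  thus ?case
    unfolding place_qubits_eq_insert_zero[OF f_g] using step Suc.hyps k(1) by simp
qed

lemma E_embed_eq:
  fixes E :: "nat \<Rightarrow> qstate \<Rightarrow> real"
  assumes zero_invariant: "\<And>n \<psi> k. n \<ge> 1 \<Longrightarrow> is_state n \<psi> \<Longrightarrow> k \<le> n \<Longrightarrow>
           E (Suc n) (insert_zero k \<psi>) = E n \<psi>"
    and "1 \<le> n" "is_state n \<phi>" "A \<subseteq> {..<N}" "card A = n"
  shows "E N (embed N A \<phi>) = E n \<phi>"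
proof -
  have "finite A" using assms(4) finite_subset by blast
  have "n \<le> N" using card_mono[OF _ assms(4)] assms(5) by simp
  have bound: "sorted_list_of_set A ! i < N" if "i < n" for i
    using nth_mem[of i "sorted_list_of_set A"] \<open>finite A\<close> assms(4,5) that by auto
  have "is_state N (embed N A \<phi>) \<and> E N (embed N A \<phi>) = E n \<phi>"
    unfolding embed_eq_place_qubits[OF \<open>finite A\<close>] assms(5)
  proof (rule place_qubits_induct[where P = "\<lambda>N \<chi>. is_state N \<chi> \<and> E N \<chi> = E n \<phi>"])
    fix N \<chi> k
    assume "n \<le> N" "is_state N \<chi> \<and> E N \<chi> = E n \<phi>" "k \<le> N"
    thus "is_state (Suc N) (insert_zero k \<chi>) \<and> E (Suc N) (insert_zero k \<chi>) = E n \<phi>"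
      using is_state_insert_zero zero_invariant assms(2) by simp
  qed (use assms \<open>n \<le> N\<close> bound strict_mono_on_nth_sorted_list_of_set in auto)
  thus ?thesis ..
qed

theorem theorem2:
  fixes E :: "nat \<Rightarrow> qstate \<Rightarrow> real"
  assumes "typeI_monotone E"
    and "\<And>n \<psi> k. n \<ge> 1 \<Longrightarrow> is_state n \<psi> \<Longrightarrow> k \<le> n \<Longrightarrow>
           E (Suc n) (insert_zero k \<psi>) = E n \<psi>"
  shows "typeII_monotone E"
  unfolding typeII_monotone_def
proof (intro allI impI, elim conjE)
  fix N n \<psi> \<phi>
  assume "1 \<le> n" "n \<le> N" "is_state N \<psi>" "is_state n \<phi>" "locc_geq N \<psi> n \<phi>"
  then obtain A P where A: "A \<subseteq> {..<N}" "card A = n"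
    and P: "wf_locc N P" "\<forall>v\<in>set (outcomes P \<psi>). snorm2 N v \<noteq> 0 \<longrightarrow> normalize N v = embed N A \<phi>"
    unfolding locc_geq_def by blast
  have "E n \<phi> = E N (embed N A \<phi>)"
    using E_embed_eq[of E, OF assms(2) \<open>1 \<le> n\<close> \<open>is_state n \<phi>\<close> A] by simp
  also have "\<dots> \<le> E N \<psi>"
    using typeI_monotone_deterministic_le[OF assms(1) _ \<open>is_state N \<psi>\<close> P] \<open>1 \<le> n\<close> \<open>n \<le> N\<close> by simp
  finally show "E n \<phi> \<le> E N \<psi>" .
qed

end
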